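(* Let $f \in \mathbb{N}_0[x^{\pm 1}]$ with $|\operatorname{supp}(f)| \geq 3$, and suppose there is a prime number $p$ with $\frac{5f(1)}{6} - 1 \leq p \leq f(1) - 2$. Then $f$ can be written as the sum of two irreducible elements of $\mathbb{N}_0[x^{\pm 1}]$.
   Context: $\mathbb{N}_0[x^{\pm 1}]$ denotes the semiring of Laurent polynomials in $x$ with nonnegative integer coefficients; $\operatorname{supp}(f)$ is the set of exponents occurring in $f$ with nonzero coefficient, and $f(1)$ is the sum of the coefficients. Its units are exactly $x^k$, $k\in\mathbb{Z}$. An element $f$ is irreducible if it is nonzero, not a unit, and whenever $f = gh$ with $g,h \in \mathbb{N}_0[x^{\pm 1}]$ one of $g,h$ is a unit. *)

theory Defs
  imports "HOL-Library.Poly_Mapping" "HOL-Computational_Algebra.Computational_Algebra"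
begin

(* N_0[x^{+-1}] modelled as int =>_0 nat with the convolution product from Poly_Mapping *)

type_synonym laurent_nat = "int \<Rightarrow>\<^sub>0 nat"

definition eval_one :: "laurent_nat \<Rightarrow> nat" where
  "eval_one f = (\<Sum>k\<in>Poly_Mapping.keys f. Poly_Mapping.lookup f k)"

end

theory Submission
  imports Defs
begin

text \<open>
  The augmentation \<open>f \<mapsto> f(1)\<close> is multiplicative and equals 1 exactly on the units \<open>x\<^sup>k\<close>,
  so an element whose augmentation is the prime \<open>p\<close> is irreducible. It thus suffices to split
  off from \<open>f\<close> an irreducible summand \<open>h\<close> with \<open>h(1) = f(1) - p\<close>, which by hypothesis is at
  most \<open>f(1)/6 + 1\<close>. Let \<open>t\<close> be an endpoint of the support of \<open>f\<close> and take \<open>h = x\<^sup>t + h'\<close>,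
  where \<open>h' \<le> f\<close> has mass \<open>f(1) - p - 1\<close> and lives either on the open half of the support
  interval away from \<open>t\<close> or at its midpoint: one of these three parts carries a third of the
  mass of \<open>f\<close>. Such an \<open>h\<close> is irreducible: in a factorization \<open>h = a b\<close> into non-units, the
  coefficient 1 at \<open>t = \<alpha> + \<beta>\<close> forces further keys \<open>\<alpha>'\<close> of \<open>a\<close> and \<open>\<beta>'\<close> of \<open>b\<close>, and the keys
  \<open>\<alpha>' + \<beta>\<close>, \<open>\<alpha> + \<beta>'\<close>, \<open>\<alpha>' + \<beta>'\<close> of \<open>h\<close> cannot all lie closer to each other than to \<open>t\<close>.
  Only two distinct exponents in the support of \<open>f\<close> are needed.
\<close>

lemma eval_one_0 [simp]: "eval_one 0 = 0"
  by (simp add: eval_one_def)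

lemma eval_one_single [simp]: "eval_one (Poly_Mapping.single u c) = c"
  by (simp add: eval_one_def)

lemma eval_one_1 [simp]: "eval_one 1 = 1"
  by (metis eval_one_single single_one)

lemma eval_one_add: "eval_one (a + b) = eval_one a + eval_one b"
  unfolding eval_one_def by (rule setsum_keys_plus_distrib) auto

lemma update_eq_add_single:
  assumes "k \<notin> Poly_Mapping.keys f"
  shows "Poly_Mapping.update k c f = f + Poly_Mapping.single k c"
  using assms
  by (intro poly_mapping_eqI)
    (auto simp: lookup_update lookup_add lookup_single in_keys_iff when_def)

lemma eval_one_single_mult: "eval_one (Poly_Mapping.single u c * b) = c * eval_one b"
proof (induction b rule: update_induct)
  case const
  then show ?case by simp
next
  case (update k d b)
  then show ?case
    by (simp add: update_eq_add_single distrib_left eval_one_add mult_single algebra_simps)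
qed

lemma eval_one_mult: "eval_one (a * b) = eval_one a * eval_one b"
proof (induction a rule: update_induct)
  case const
  then show ?case by simp
next
  case (update k d a)
  then show ?case
    by (simp add: update_eq_add_single distrib_right eval_one_add eval_one_single_mult)
qed

lemma eq_single_eval_one_if_keys_subset:
  assumes "Poly_Mapping.keys a \<subseteq> {u}"
  shows "a = Poly_Mapping.single u (eval_one a)"
  using assms
  by (intro poly_mapping_eqI)
    (fastforce simp: eval_one_def lookup_single when_def in_keys_iff subset_singleton_iff)

lemma laurent_nat_dvd_one_iff: "a dvd 1 \<longleftrightarrow> eval_one (a :: laurent_nat) = 1"
proof
  assume "a dvd 1"
  then obtain b where "1 = a * b" by (elim dvdE)
  then have "eval_one a * eval_one b = 1" by (metis eval_one_mult eval_one_1)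
  then show "eval_one a = 1" by simp
next
  assume ev: "eval_one a = 1"
  then obtain u where u: "u \<in> Poly_Mapping.keys a"
    by (fastforce simp: eval_one_def)
  have "1 = Poly_Mapping.lookup a u + (\<Sum>k\<in>Poly_Mapping.keys a - {u}. Poly_Mapping.lookup a k)"
    using ev u by (simp add: eval_one_def sum.remove)
  moreover have "Poly_Mapping.lookup a u \<noteq> 0" using u by (simp add: in_keys_iff)
  ultimately have "(\<Sum>k\<in>Poly_Mapping.keys a - {u}. Poly_Mapping.lookup a k) = 0" by linarith
  then have "\<forall>k\<in>Poly_Mapping.keys a - {u}. Poly_Mapping.lookup a k = 0" by simp
  then have "Poly_Mapping.keys a \<subseteq> {u}" by (auto simp: in_keys_iff)
  then have "a = Poly_Mapping.single u 1" using ev eq_single_eval_one_if_keys_subset by metis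
  then have "1 = a * Poly_Mapping.single (- u) 1"
    by (simp only: mult_single add.right_inverse mult_1 single_one)
  then show "a dvd 1" ..
qed

lemma irreducible_if_prime_eval_one:
  assumes "prime (eval_one g)"
  shows "irreducible g"
proof (rule irreducibleI)
  show "g \<noteq> 0" "\<not> g dvd 1" using assms by (auto simp: laurent_nat_dvd_one_iff)
  fix a b assume "g = a * b"
  then have "eval_one g = eval_one a * eval_one b" by (simp add: eval_one_mult)
  then show "a dvd 1 \<or> b dvd 1"
    using assms by (metis prime_product laurent_nat_dvd_one_iff)
qed

lemma lookup_single_mult:
  fixes b :: "'a :: ab_group_add \<Rightarrow>\<^sub>0 'b :: semiring_0"
  shows "Poly_Mapping.lookup (Poly_Mapping.single u c * b) t = c * Poly_Mapping.lookup b (t - u)"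
proof -
  have "Sum_any (\<lambda>q. Poly_Mapping.lookup b q when t = u + q)
      = Sum_any (\<lambda>q. Poly_Mapping.lookup b q when q = t - u)"
    by (intro Sum_any.cong) (auto simp: when_def)
  then show ?thesis
    by (simp add: lookup_mult lookup_single when_mult)
qed

lemma add_in_keys_mult:
  assumes "u \<in> Poly_Mapping.keys a" "v \<in> Poly_Mapping.keys (b :: laurent_nat)"
  shows "u + v \<in> Poly_Mapping.keys (a * b)"
proof -
  define a' where "a' = a - Poly_Mapping.single u (Poly_Mapping.lookup a u)"
  have "a = Poly_Mapping.single u (Poly_Mapping.lookup a u) + a'"
    unfolding a'_def
    by (intro poly_mapping_eqI) (auto simp: lookup_add lookup_minus lookup_single when_def)
  then have "Poly_Mapping.lookup (a * b) (u + v)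
      = Poly_Mapping.lookup a u * Poly_Mapping.lookup b v + Poly_Mapping.lookup (a' * b) (u + v)"
    by (metis distrib_right lookup_add lookup_single_mult add_diff_cancel_left')
  then show ?thesis using assms by (simp add: in_keys_iff)
qed

lemma dvd_one_if_monomial_factor_of_simple_coeff:
  fixes a b :: laurent_nat
  assumes "Poly_Mapping.keys a \<subseteq> {u}" and "Poly_Mapping.lookup (a * b) t = 1"
  shows "a dvd 1"
proof -
  have "eval_one a * Poly_Mapping.lookup b (t - u) = 1"
    using assms eq_single_eval_one_if_keys_subset lookup_single_mult by metis
  then show ?thesis by (simp add: laurent_nat_dvd_one_iff)
qed

definition isolated_from :: "int \<Rightarrow> int set \<Rightarrow> bool" where
  "isolated_from t S \<longleftrightarrow> (\<forall>s\<in>S. \<forall>s'\<in>S. \<bar>s - s'\<bar> < \<bar>t - s\<bar>)"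

lemma irreducible_if_isolated_simple_key:
  fixes h :: laurent_nat
  assumes "2 \<le> eval_one h" and t: "Poly_Mapping.lookup h t = 1"
    and iso: "isolated_from t (Poly_Mapping.keys h - {t})"
  shows "irreducible h"
proof (rule irreducibleI)
  show "h \<noteq> 0" "\<not> h dvd 1" using assms(1) by (auto simp: laurent_nat_dvd_one_iff)
  fix a b assume hab: "h = a * b"
  show "a dvd 1 \<or> b dvd 1"
  proof (rule ccontr)
    assume "\<not> (a dvd 1 \<or> b dvd 1)"
    then have na: "\<not> a dvd 1" and nb: "\<not> b dvd 1" by auto
    have "t \<in> Poly_Mapping.keys h" using t by (simp add: in_keys_iff)
    then obtain \<alpha> \<beta> where \<alpha>: "\<alpha> \<in> Poly_Mapping.keys a" and \<beta>: "\<beta> \<in> Poly_Mapping.keys b"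
      and t_eq: "t = \<alpha> + \<beta>"
      using keys_mult hab by blast
    obtain \<alpha>' where \<alpha>': "\<alpha>' \<in> Poly_Mapping.keys a" "\<alpha>' \<noteq> \<alpha>"
      using dvd_one_if_monomial_factor_of_simple_coeff[of a \<alpha> b t] na t hab by auto
    obtain \<beta>' where \<beta>': "\<beta>' \<in> Poly_Mapping.keys b" "\<beta>' \<noteq> \<beta>"
      using dvd_one_if_monomial_factor_of_simple_coeff[of b \<beta> a t] nb t hab
      by (auto simp: mult.commute)
    have s1: "\<alpha>' + \<beta> \<in> Poly_Mapping.keys h - {t}"
      using add_in_keys_mult[OF \<alpha>'(1) \<beta>] hab t_eq \<alpha>' by auto
    have s2: "\<alpha> + \<beta>' \<in> Poly_Mapping.keys h - {t}"
      using add_in_keys_mult[OF \<alpha> \<beta>'(1)] hab t_eq \<beta>' by auto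
    have s3: "\<alpha>' + \<beta>' \<in> Poly_Mapping.keys h"
      using add_in_keys_mult[OF \<alpha>'(1) \<beta>'(1)] hab by auto
    show False
    proof (cases "\<alpha>' + \<beta>' = t")
      case True
      have "\<bar>(\<alpha>' + \<beta>) - (\<alpha> + \<beta>')\<bar> < \<bar>t - (\<alpha>' + \<beta>)\<bar>"
        using iso s1 s2 unfolding isolated_from_def by blast
      then show False using True t_eq \<alpha>' by (simp add: abs_if split: if_splits)
    next
      case False
      then have "\<alpha>' + \<beta>' \<in> Poly_Mapping.keys h - {t}" using s3 by auto
      then have "\<bar>(\<alpha>' + \<beta>) - (\<alpha>' + \<beta>')\<bar> < \<bar>t - (\<alpha>' + \<beta>)\<bar>"
        and "\<bar>(\<alpha> + \<beta>') - (\<alpha>' + \<beta>')\<bar> < \<bar>t - (\<alpha> + \<beta>')\<bar>"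
        using iso s1 s2 unfolding isolated_from_def by blast+
      then show False using t_eq by (simp add: abs_if split: if_splits)
    qed
  qed
qed

definition partial_mass :: "laurent_nat \<Rightarrow> int set \<Rightarrow> nat" where
  "partial_mass f X = (\<Sum>k\<in>Poly_Mapping.keys f \<inter> X. Poly_Mapping.lookup f k)"

lemma partial_mass_UNIV: "partial_mass f UNIV = eval_one f"
  by (simp add: partial_mass_def eval_one_def)

lemma partial_mass_Un:
  "X \<inter> Y = {} \<Longrightarrow> partial_mass f (X \<union> Y) = partial_mass f X + partial_mass f Y"
  unfolding partial_mass_def Int_Un_distrib
  by (rule sum.union_disjoint) auto

lemma keys_subset_if_lookup_le:
  fixes f h :: "'a \<Rightarrow>\<^sub>0 nat"
  shows "\<forall>k. Poly_Mapping.lookup h k \<le> Poly_Mapping.lookup f k \<Longrightarrow> Poly_Mapping.keys h \<subseteq> Poly_Mapping.keys f"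
  by (metis in_keys_iff le_zero_eq subsetI)

lemma exists_submapping_with_mass:
  fixes f :: laurent_nat
  assumes "r \<le> partial_mass f X"
  shows "\<exists>h. (\<forall>k. Poly_Mapping.lookup h k \<le> Poly_Mapping.lookup f k)
    \<and> Poly_Mapping.keys h \<subseteq> X \<and> eval_one h = r"
  using assms
proof (induction r)
  case 0
  show ?case by (rule exI[of _ 0]) simp
next
  case (Suc r)
  then obtain h where le: "\<forall>k. Poly_Mapping.lookup h k \<le> Poly_Mapping.lookup f k"
    and kX: "Poly_Mapping.keys h \<subseteq> X" and ev: "eval_one h = r" by auto
  have "\<exists>k\<in>Poly_Mapping.keys f \<inter> X. Poly_Mapping.lookup h k < Poly_Mapping.lookup f k"
  proof (rule ccontr)
    assume "\<not> ?thesis"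
    then have eq: "\<forall>k\<in>Poly_Mapping.keys f \<inter> X. Poly_Mapping.lookup h k = Poly_Mapping.lookup f k"
      using le by (meson le_neq_implies_less)
    have "Poly_Mapping.keys h \<subseteq> Poly_Mapping.keys f \<inter> X"
      using keys_subset_if_lookup_le[OF le] kX by blast
    then have "eval_one h = (\<Sum>k\<in>Poly_Mapping.keys f \<inter> X. Poly_Mapping.lookup h k)"
      unfolding eval_one_def
      by (rule sum.mono_neutral_left[rotated]) (auto simp: in_keys_iff)
    also have "\<dots> = partial_mass f X"
      unfolding partial_mass_def using eq by (intro sum.cong) auto
    finally show False using ev Suc.prems by simp
  qed
  then obtain k where k: "k \<in> Poly_Mapping.keys f \<inter> X"
    "Poly_Mapping.lookup h k < Poly_Mapping.lookup f k"
    by blast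
  let ?h = "h + Poly_Mapping.single k 1"
  have "\<forall>j. Poly_Mapping.lookup ?h j \<le> Poly_Mapping.lookup f j"
    using le k by (auto simp: lookup_add lookup_single when_def)
  moreover have "Poly_Mapping.keys ?h \<subseteq> X"
    using keys_add[of h "Poly_Mapping.single k 1"] kX k by auto
  moreover have "eval_one ?h = Suc r" by (simp add: eval_one_add ev)
  ultimately show ?case by blast
qed

lemma sum_of_irreducibles_if_isolated_key:
  fixes f :: laurent_nat
  assumes t: "t \<in> Poly_Mapping.keys f" "t \<notin> X"
    and iso: "isolated_from t (Poly_Mapping.keys f \<inter> X)"
    and p: "prime p" "p + 2 \<le> eval_one f"
    and mass: "eval_one f - p - 1 \<le> partial_mass f X"
  shows "\<exists>g h. irreducible g \<and> irreducible h \<and> f = g + h"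
proof -
  obtain h' where le: "\<forall>k. Poly_Mapping.lookup h' k \<le> Poly_Mapping.lookup f k"
    and kX: "Poly_Mapping.keys h' \<subseteq> X" and ev: "eval_one h' = eval_one f - p - 1"
    using exists_submapping_with_mass[OF mass] by blast
  define h where "h = h' + Poly_Mapping.single t 1"
  have h't: "Poly_Mapping.lookup h' t = 0" using kX t by (auto simp: in_keys_iff)
  have lookup_h: "Poly_Mapping.lookup h k = Poly_Mapping.lookup h' k + (if k = t then 1 else 0)" for k
    unfolding h_def by (simp add: lookup_add lookup_single when_def)
  have h_le: "Poly_Mapping.lookup h k \<le> Poly_Mapping.lookup f k" for k
    using le h't t by (cases "k = t") (auto simp: lookup_h in_keys_iff)
  have "Poly_Mapping.keys h - {t} \<subseteq> Poly_Mapping.keys h'"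
    by (auto simp: in_keys_iff lookup_h split: if_splits)
  then have "Poly_Mapping.keys h - {t} \<subseteq> Poly_Mapping.keys f \<inter> X"
    using keys_subset_if_lookup_le[OF le] kX by blast
  then have "isolated_from t (Poly_Mapping.keys h - {t})"
    using iso unfolding isolated_from_def by blast
  moreover have "eval_one h = eval_one f - p" using ev p(2) by (simp add: h_def eval_one_add)
  ultimately have irr_h: "irreducible h"
    using p(2) h't by (intro irreducible_if_isolated_simple_key) (auto simp: lookup_h)
  define g where "g = f - h"
  have f_eq: "f = g + h"
    unfolding g_def by (intro poly_mapping_eqI) (simp add: lookup_add lookup_minus h_le)
  then have "eval_one f = eval_one g + (eval_one f - p)"
    using \<open>eval_one h = eval_one f - p\<close> by (metis eval_one_add)
  then have "eval_one g = p" using p(2) by linarith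
  then have "irreducible g" using p(1) irreducible_if_prime_eval_one by simp
  with irr_h f_eq show ?thesis by blast
qed

lemma exists_isolated_heavy_part:
  fixes f :: laurent_nat
  assumes "2 \<le> card (Poly_Mapping.keys f)" and "3 * r \<le> eval_one f"
  shows "\<exists>t X. t \<in> Poly_Mapping.keys f \<and> t \<notin> X
    \<and> isolated_from t (Poly_Mapping.keys f \<inter> X) \<and> r \<le> partial_mass f X"
proof -
  define K where "K = Poly_Mapping.keys f"
  define lo where "lo = Min K"
  define hi where "hi = Max K"
  have "K \<noteq> {}" using assms(1) by (auto simp: K_def)
  then have lo: "lo \<in> K" and hi: "hi \<in> K" and bounds: "\<And>s. s \<in> K \<Longrightarrow> lo \<le> s \<and> s \<le> hi"
    by (auto simp: lo_def hi_def K_def)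
  have "lo < hi"
  proof (rule ccontr)
    assume "\<not> lo < hi"
    then have "K \<subseteq> {lo}" using bounds by fastforce
    then show False using assms(1) card_mono[of "{lo}" K] by (simp add: K_def)
  qed
  define L where "L = {s. 2 * s < lo + hi}"
  define R where "R = {s. lo + hi < 2 * s}"
  define M where "M = {s. 2 * s = lo + hi}"
  have "L \<union> (R \<union> M) = UNIV" and disjoint: "L \<inter> (R \<union> M) = {}" "R \<inter> M = {}"
    by (auto simp: L_def R_def M_def)
  then have "eval_one f = partial_mass f (L \<union> (R \<union> M))"
    by (simp add: partial_mass_UNIV)
  also have "\<dots> = partial_mass f L + (partial_mass f R + partial_mass f M)"
    using disjoint by (simp add: partial_mass_Un)
  finally consider "r \<le> partial_mass f L" | "r \<le> partial_mass f R" | "r \<le> partial_mass f M"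
    using assms(2) by linarith
  then show ?thesis
  proof cases
    case 1
    have "isolated_from hi (K \<inter> L)"
      unfolding isolated_from_def
    proof (intro ballI)
      fix s s' assume "s \<in> K \<inter> L" "s' \<in> K \<inter> L"
      then have "lo \<le> s" "lo \<le> s'" "2 * s < lo + hi" "2 * s' < lo + hi"
        using bounds by (auto simp: L_def)
      then show "\<bar>s - s'\<bar> < \<bar>hi - s\<bar>" by (simp add: abs_if)
    qed
    moreover have "hi \<notin> L" using \<open>lo < hi\<close> by (simp add: L_def)
    ultimately show ?thesis using 1 hi unfolding K_def by blast
  next
    case 2
    have "isolated_from lo (K \<inter> R)"
      unfolding isolated_from_def
    proof (intro ballI)
      fix s s' assume "s \<in> K \<inter> R" "s' \<in> K \<inter> R"
      then have "s \<le> hi" "s' \<le> hi" "lo + hi < 2 * s" "lo + hi < 2 * s'"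
        using bounds by (auto simp: R_def)
      then show "\<bar>s - s'\<bar> < \<bar>lo - s\<bar>" by (simp add: abs_if)
    qed
    moreover have "lo \<notin> R" using \<open>lo < hi\<close> by (simp add: R_def)
    ultimately show ?thesis using 2 lo unfolding K_def by blast
  next
    case 3
    have "isolated_from lo (K \<inter> M)"
      using \<open>lo < hi\<close> by (auto simp: isolated_from_def M_def)
    moreover have "lo \<notin> M" using \<open>lo < hi\<close> by (simp add: M_def)
    ultimately show ?thesis using 3 lo unfolding K_def by blast
  qed
qed

theorem lemma2p10:
  fixes f :: laurent_nat and p :: nat
  assumes "card (Poly_Mapping.keys f) \<ge> 3"
    and "prime p"
    and "5 * real (eval_one f) / 6 - 1 \<le> real p"
    and "real p \<le> real (eval_one f) - 2"
  shows "\<exists>g h :: laurent_nat. irreducible g \<and> irreducible h \<and> f = g + h"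
proof -
  have "2 \<le> card (Poly_Mapping.keys f)" using assms(1) by simp
  moreover have "3 * (eval_one f - p - 1) \<le> eval_one f" using assms(3) by linarith
  ultimately obtain t X where "t \<in> Poly_Mapping.keys f" "t \<notin> X"
    "isolated_from t (Poly_Mapping.keys f \<inter> X)" "eval_one f - p - 1 \<le> partial_mass f X"
    using exists_isolated_heavy_part by blast
  moreover have "p + 2 \<le> eval_one f" using assms(4) by linarith
  ultimately show ?thesis
    using sum_of_irreducibles_if_isolated_key assms(2) by blast
qed

end
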